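(* Let $d\in\mathbb{N}$, $d\geq 2$, $L\geq 1$, $X\subseteq \mathbb{Z}^{d}$ and let $f\colon X\to \mathbb{R}^{d}$ be an $L$-bilipschitz mapping. Suppose that there exists $\lambda\geq 1$ such that $\mathbb{R}^{d}\subseteq \bigcup_{x\in X}\overline{B}(x,\lambda)$. Then there exists a bilipschitz extension $F\colon \mathbb{Z}^{d}\to\mathbb{R}^{d}$ of $f$ with \[\operatorname{Lip}(F)\leq 4\lambda L, \qquad \operatorname{Lip}(F^{-1})\leq 24\lambda^{2}L\sqrt{d}.\]
   Context: $\overline{B}(x,\lambda)$ is the closed Euclidean ball. $\operatorname{Lip}(g)=\sup_{x\neq y}\|g(y)-g(x)\|/\|y-x\|$. A mapping is $L$-bilipschitz if it is injective and both it and its inverse are $L$-Lipschitz. *)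

theory Defs
  imports "HOL-Analysis.Analysis"
begin

definition int_lattice :: "(real ^ 'n) set" where
  "int_lattice = {x. \<forall>i. x $ i \<in> \<int>}"

definition bilipschitz_on :: "real \<Rightarrow> 'a::metric_space set \<Rightarrow> ('a \<Rightarrow> 'b::metric_space) \<Rightarrow> bool" where
  "bilipschitz_on L X f \<longleftrightarrow> inj_on f X \<and> L-lipschitz_on X f \<and> L-lipschitz_on (f ` X) (inv_into X f)"

end

theory Submission
  imports Defs
begin

text \<open>Choose for every point z a point p z of the net X within distance lam of z, with p the
identity on X, and put F z = f (p z) + t (z - p z) for t = 1 / (4 lam L). Two points with the
same base point are moved by a homothety of ratio t. For distinct base points x, y the images
f x, f y are at least 1/L apart, whereas the perturbation t ((z - x) - (w - y)) has norm at
most 1/(2L), so F keeps them apart; since distinct lattice points are at distance at least 1,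
the resulting additive errors are absorbed into the multiplicative constants. This already
gives Lip(F^-1) <= 6 lam L, independently of the dimension.\<close>

lemma dist_int_lattice_ge_1:
  fixes z w :: "real ^ 'n"
  assumes "z \<in> int_lattice" "w \<in> int_lattice" "z \<noteq> w"
  shows "1 \<le> dist z w"
proof -
  obtain i where i: "z $ i \<noteq> w $ i" using assms(3) by (auto simp: vec_eq_iff)
  have "z $ i - w $ i \<in> \<int>" using assms(1,2) by (auto simp: int_lattice_def)
  then have "1 \<le> \<bar>z $ i - w $ i\<bar>" using i by (intro Ints_nonzero_abs_ge1) auto
  also have "\<dots> = \<bar>(z - w) $ i\<bar>" by simp
  also have "\<dots> \<le> norm (z - w)" by (rule component_le_norm_cart)
  finally show ?thesis by (simp add: dist_norm)
qed

lemma bilipschitz_onD: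
  assumes "bilipschitz_on L X f" "x \<in> X" "y \<in> X"
  shows "dist (f x) (f y) \<le> L * dist x y" and "dist x y \<le> L * dist (f x) (f y)"
proof -
  show "dist (f x) (f y) \<le> L * dist x y"
    using assms by (auto simp: bilipschitz_on_def lipschitz_on_def)
  have "dist (inv_into X f (f x)) (inv_into X f (f y)) \<le> L * dist (f x) (f y)"
    using assms by (auto simp: bilipschitz_on_def lipschitz_on_def)
  then show "dist x y \<le> L * dist (f x) (f y)"
    using assms by (simp add: bilipschitz_on_def inv_into_f_f)
qed

lemma obtain_retraction_onto_net:
  fixes X :: "'a::metric_space set"
  assumes "UNIV \<subseteq> (\<Union>x\<in>X. cball x lam)"
  obtains p where "\<And>z. p z \<in> X" "\<And>z. dist z (p z) \<le> lam" "\<And>x. x \<in> X \<Longrightarrow> p x = x"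
proof -
  have near: "\<exists>x\<in>X. dist z x \<le> lam" for z
    using subsetD[OF assms UNIV_I] by (force simp: dist_commute)
  then have "0 \<le> lam" by (meson dist_not_less_zero order_trans not_le)
  then have "\<exists>x. x \<in> X \<and> dist z x \<le> lam \<and> (z \<in> X \<longrightarrow> x = z)" for z
    using near[of z] by (cases "z \<in> X") auto
  then obtain p where "\<And>z. p z \<in> X \<and> dist z (p z) \<le> lam \<and> (z \<in> X \<longrightarrow> p z = z)"
    by metis
  then show ?thesis using that by blast
qed

lemma lipschitz_on_inv_into_if_dist_le:
  assumes "\<And>z w. z \<in> S \<Longrightarrow> w \<in> S \<Longrightarrow> dist z w \<le> C * dist (F z) (F w)" "0 \<le> C"
  shows "inj_on F S" and "C-lipschitz_on (F ` S) (inv_into S F)"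
proof -
  show inj: "inj_on F S"
    by (rule inj_onI) (use assms(1) in fastforce)
  show "C-lipschitz_on (F ` S) (inv_into S F)"
  proof (rule lipschitz_onI)
    fix a b assume "a \<in> F ` S" "b \<in> F ` S"
    then obtain z w where "z \<in> S" "w \<in> S" "a = F z" "b = F w" by blast
    then show "dist (inv_into S F a) (inv_into S F b) \<le> C * dist a b"
      using assms(1) inj by (simp add: inv_into_f_f)
  qed (fact assms(2))
qed

definition net_extension :: "real \<Rightarrow> ('a::real_vector \<Rightarrow> 'a) \<Rightarrow> ('a \<Rightarrow> 'a) \<Rightarrow> 'a \<Rightarrow> 'a" where
  "net_extension t f p z = f (p z) + t *\<^sub>R (z - p z)"

lemma net_extension_diff:
  "net_extension t f p z - net_extension t f p w =
     (f (p z) - f (p w)) + t *\<^sub>R ((z - p z) - (w - p w))"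
  by (simp add: net_extension_def algebra_simps)

lemma dist_net_extension_same_base:
  fixes f p :: "'a::real_normed_vector \<Rightarrow> 'a"
  assumes "p z = p w" "0 \<le> t"
  shows "dist (net_extension t f p z) (net_extension t f p w) = t * dist z w"
proof -
  have "net_extension t f p z - net_extension t f p w = t *\<^sub>R (z - w)"
    using assms(1) by (simp add: net_extension_diff algebra_simps)
  then show ?thesis using assms(2) by (simp add: dist_norm)
qed

lemma dist_net_extension_perturbation:
  fixes f p :: "'a::real_normed_vector \<Rightarrow> 'a"
  assumes "dist z (p z) \<le> lam" "dist w (p w) \<le> lam" "1 \<le> L" "1 \<le> lam"
  shows "\<bar>dist (net_extension (1 / (4 * lam * L)) f p z) (net_extension (1 / (4 * lam * L)) f p w)
            - dist (f (p z)) (f (p w))\<bar> \<le> 1 / (2 * L)"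
proof -
  define t where "t = 1 / (4 * lam * L)"
  define e where "e = t *\<^sub>R ((z - p z) - (w - p w))"
  have "norm ((z - p z) - (w - p w)) \<le> norm (z - p z) + norm (w - p w)"
    by (rule norm_triangle_ineq4)
  also have "\<dots> \<le> 2 * lam" using assms(1,2) by (simp add: dist_norm)
  finally have "t * norm ((z - p z) - (w - p w)) \<le> t * (2 * lam)"
    using assms(3,4) by (intro mult_left_mono) (auto simp: t_def)
  also have "\<dots> = 1 / (2 * L)" using assms(3,4) by (simp add: t_def)
  finally have "norm e \<le> 1 / (2 * L)" using assms(3,4) by (simp add: e_def t_def)
  moreover have "\<bar>norm ((f (p z) - f (p w)) + e) - norm (f (p z) - f (p w))\<bar> \<le> norm e"
    using norm_triangle_ineq3[of "(f (p z) - f (p w)) + e" "f (p z) - f (p w)"] by simp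
  ultimately show ?thesis
    by (simp add: dist_norm net_extension_diff e_def t_def)
qed

lemma dist_net_extension_le:
  fixes f p :: "'a::real_normed_vector \<Rightarrow> 'a"
  assumes "1 \<le> dist z w" "dist z (p z) \<le> lam" "dist w (p w) \<le> lam"
    and f_lip: "dist (f (p z)) (f (p w)) \<le> L * dist (p z) (p w)"
    and "1 \<le> L" "1 \<le> lam"
  shows "dist (net_extension (1 / (4 * lam * L)) f p z) (net_extension (1 / (4 * lam * L)) f p w)
           \<le> 4 * lam * L * dist z w"
    (is "dist (?F z) (?F w) \<le> _")
proof -
  have lamL: "1 \<le> lam * L" using assms(5,6) mult_mono[of 1 lam 1 L] by simp
  have "dist (p z) (p w) \<le> dist z w + 2 * lam"
    using dist_triangle[of "p z" "p w" z] dist_triangle[of z "p w" w] dist_commute[of z "p z"]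
      assms(2,3) by linarith
  then have "L * dist (p z) (p w) \<le> L * (dist z w + 2 * lam)"
    using assms(5) by (intro mult_left_mono) auto
  then have "dist (?F z) (?F w) \<le> L * dist z w + 2 * lam * L * 1 + 1 / (2 * L)"
    using dist_net_extension_perturbation[OF assms(2,3,5,6), of f] f_lip
    by (simp add: algebra_simps)
  also have "\<dots> \<le> lam * L * dist z w + 2 * lam * L * dist z w + lam * L * dist z w"
  proof (intro add_mono)
    show "L * dist z w \<le> lam * L * dist z w"
      using assms(1,5,6) by (intro mult_right_mono) auto
    show "2 * lam * L * 1 \<le> 2 * lam * L * dist z w"
      using assms(1,5,6) by (intro mult_left_mono) auto
    have "1 / (2 * L) \<le> 1" using assms(5) by simp
    also have "\<dots> \<le> lam * L * dist z w"
      using lamL assms(1) mult_mono[of 1 "lam * L" 1 "dist z w"] by simp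
    finally show "1 / (2 * L) \<le> lam * L * dist z w" .
  qed
  also have "\<dots> = 4 * lam * L * dist z w" by (simp add: algebra_simps)
  finally show ?thesis .
qed

lemma dist_le_net_extension_different_base:
  fixes f p :: "'a::real_normed_vector \<Rightarrow> 'a"
  assumes "1 \<le> dist (p z) (p w)" "dist z (p z) \<le> lam" "dist w (p w) \<le> lam"
    and f_colip: "dist (p z) (p w) \<le> L * dist (f (p z)) (f (p w))"
    and "1 \<le> L" "1 \<le> lam"
  shows "dist z w \<le> 6 * lam * L *
           dist (net_extension (1 / (4 * lam * L)) f p z) (net_extension (1 / (4 * lam * L)) f p w)"
    (is "_ \<le> _ * dist (?F z) (?F w)")
proof -
  have "dist (p z) (p w) / (2 * L) \<le> dist (f (p z)) (f (p w)) - 1 / (2 * L)"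
    using f_colip assms(1,5) by (simp add: field_simps)
  also have "\<dots> \<le> dist (?F z) (?F w)"
    using dist_net_extension_perturbation[OF assms(2,3,5,6), of f] by linarith
  finally have base: "dist (p z) (p w) \<le> 2 * L * dist (?F z) (?F w)"
    using assms(5) by (simp add: field_simps)
  have "dist z w \<le> 1 * dist (p z) (p w) + 2 * lam * 1"
    using dist_triangle[of z w "p z"] dist_triangle[of "p z" w "p w"] dist_commute[of w "p w"]
      assms(2,3) by linarith
  also have "\<dots> \<le> lam * dist (p z) (p w) + 2 * lam * dist (p z) (p w)"
    using assms(1,6) by (intro add_mono mult_right_mono mult_left_mono) auto
  also have "\<dots> = 3 * lam * dist (p z) (p w)" by simp
  also have "\<dots> \<le> 3 * lam * (2 * L * dist (?F z) (?F w))"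
    using base assms(6) by (simp add: mult_left_mono)
  finally show ?thesis by (simp add: algebra_simps)
qed

lemma net_extension_bilipschitz:
  fixes S X :: "'a::real_normed_vector set"
  assumes separated: "\<And>z w. z \<in> S \<Longrightarrow> w \<in> S \<Longrightarrow> z \<noteq> w \<Longrightarrow> 1 \<le> dist z w"
    and "X \<subseteq> S" "bilipschitz_on L X f"
    and p: "\<And>z. p z \<in> X" "\<And>z. dist z (p z) \<le> lam"
    and "1 \<le> L" "1 \<le> lam"
  defines "F \<equiv> net_extension (1 / (4 * lam * L)) f p"
  shows "(4 * lam * L)-lipschitz_on S F" and "inj_on F S"
    and "(6 * lam * L)-lipschitz_on (F ` S) (inv_into S F)"
proof -
  have f_bounds: "dist (f (p z)) (f (p w)) \<le> L * dist (p z) (p w)"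
      "dist (p z) (p w) \<le> L * dist (f (p z)) (f (p w))" for z w
    using bilipschitz_onD[OF assms(3) p(1) p(1)] by auto
  show "(4 * lam * L)-lipschitz_on S F"
  proof (rule lipschitz_onI)
    fix z w assume "z \<in> S" "w \<in> S"
    then consider "z = w" | "1 \<le> dist z w" using separated by blast
    then show "dist (F z) (F w) \<le> 4 * lam * L * dist z w"
    proof cases
      case 2
      then show ?thesis
        using dist_net_extension_le[where f = f and p = p, OF _ p(2) p(2) f_bounds(1) assms(6,7)]
        by (simp add: F_def)
    qed simp
  qed (use assms(6,7) in simp)
  have co_lipschitz: "dist z w \<le> 6 * lam * L * dist (F z) (F w)" if "z \<in> S" "w \<in> S" for z w
  proof (cases "p z = p w")
    case True
    then show ?thesis
      using assms(6,7) by (simp add: F_def dist_net_extension_same_base)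
  next
    case False
    then have "1 \<le> dist (p z) (p w)" using separated p(1) assms(2) by blast
    then show ?thesis
      using dist_le_net_extension_different_base[where f = f and p = p,
          OF _ p(2) p(2) f_bounds(2) assms(6,7)]
      by (simp add: F_def)
  qed
  have "0 \<le> 6 * lam * L" using assms(6,7) by simp
  then show "inj_on F S" and "(6 * lam * L)-lipschitz_on (F ` S) (inv_into S F)"
    using lipschitz_on_inv_into_if_dist_le[OF co_lipschitz] by blast+
qed

theorem lemma4p2:
  fixes X :: "(real ^ 'n) set" and f :: "real ^ 'n \<Rightarrow> real ^ 'n" and L lam :: real
  assumes "CARD('n) \<ge> 2"
    and "L \<ge> 1"
    and "X \<subseteq> int_lattice"
    and "bilipschitz_on L X f"
    and "lam \<ge> 1"
    and "UNIV \<subseteq> (\<Union>x\<in>X. cball x lam)"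
  shows "\<exists>F :: real ^ 'n \<Rightarrow> real ^ 'n.
           (\<forall>x\<in>X. F x = f x) \<and> inj_on F int_lattice \<and>
           (4 * lam * L)-lipschitz_on int_lattice F \<and>
           (24 * lam\<^sup>2 * L * sqrt (real CARD('n)))-lipschitz_on (F ` int_lattice) (inv_into int_lattice F)"
proof -
  obtain p where p: "\<And>z. p z \<in> X" "\<And>z. dist z (p z) \<le> lam" "\<And>x. x \<in> X \<Longrightarrow> p x = x"
    using obtain_retraction_onto_net[OF assms(6)] by blast
  define F where "F = net_extension (1 / (4 * lam * L)) f p"
  note F_bilipschitz =
    net_extension_bilipschitz[OF dist_int_lattice_ge_1 assms(3,4) p(1,2) assms(2,5), folded F_def]
  have "6 * lam * L \<le> 24 * lam\<^sup>2 * L * 1"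
    using assms(2,5) mult_right_mono[of 1 lam "24 * lam * L"] by (simp add: power2_eq_square)
  also have "\<dots> \<le> 24 * lam\<^sup>2 * L * sqrt (real CARD('n))"
    using assms(1,2) by (intro mult_left_mono) auto
  finally have "(24 * lam\<^sup>2 * L * sqrt (real CARD('n)))-lipschitz_on (F ` int_lattice)
      (inv_into int_lattice F)"
    using F_bilipschitz(3) by (rule lipschitz_on_le[rotated])
  moreover have "\<forall>x\<in>X. F x = f x"
    using p(3) by (simp add: F_def net_extension_def)
  ultimately show ?thesis using F_bilipschitz(1,2) by blast
qed

end
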